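(* Let $(\mathsf{X},\mathcal{X})$ and $(\mathsf{Y},\mathcal{Y})$ be measurable spaces and let $\mathsf{Z}\subseteq\mathsf{X}\times\mathsf{Y}$ be a complete separable metric space with a bounded metric $\rho$, endowed with its Borel $\sigma$-algebra $\mathfrak{B}(\mathsf{Z})$. Let $\mathrm{pr}_\mathsf{X}:\mathsf{Z}\to\mathsf{X}$, $\mathrm{pr}_\mathsf{Y}:\mathsf{Z}\to\mathsf{Y}$ be the projections, and assume $\mathrm{pr}_\mathsf{X}^{-1}(\mathrm{pr}_\mathsf{X}(\mathsf{Z})\cap\mathcal{X})\subseteq\mathfrak{B}(\mathsf{Z})$ and $\mathrm{pr}_\mathsf{Y}^{-1}(\mathrm{pr}_\mathsf{Y}(\mathsf{Z})\cap\mathcal{Y})\subseteq\mathfrak{B}(\mathsf{Z})$. Let $\{Z_n\}_{n\ge0}$ be a temporally homogeneous Markov chain on $\mathsf{Z}$ with one-step transition kernel $\mathcal{P}(z,\mathrm{d}\bar z)$. Assume: (A1) $\mathsf{Y}\subseteq\mathbb{R}$, $\mathcal{Y}=\mathfrak{B}(\mathbb{R})\cap\mathsf{Y}$, and $\mathscr{H}\subseteq\mathsf{Y}^{\mathsf{X}}$ is a totally bounded metric space with metric $\rho_\mathscr{H}$; (A2) $\ell:\mathsf{Y}\times\mathsf{Y}\to[0,\infty)$ is measurable and, writing $\ell_h(z):=\ell(h(\mathrm{pr}_\mathsf{X}(z)),\mathrm{pr}_\mathsf{Y}(z))$ for $h\in\mathscr{H}$, there are $L,\bar L\ge0$ with $|\ell_{h_1}(z_1)-\ell_{h_2}(z_2)|\le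 L\rho(z_1,z_2)+\bar L\rho_\mathscr{H}(h_1,h_2)$ for all $z_1,z_2\in\mathsf{Z}$, $h_1,h_2\in\mathscr{H}$; (A3) $\mathsf{Y}$ is bounded and there is $\eta\in(0,1)$ such that $\mathscr{W}(\mathcal{P}(z_1,\cdot),\mathcal{P}(z_2,\cdot))\le(1-\eta)\rho(z_1,z_2)$ for all $z_1,z_2\in\mathsf{Z}$. Let $\pi$ be the (unique) invariant probability measure of $\{Z_n\}_{n\ge0}$ and let $C_1,C_2>0$ be constants such that $\mathscr{W}(\mathcal{P}^n(z,\cdot),\pi)\le C_1\mathrm{e}^{-C_2n}$ for all $z\in\mathsf{Z}$ and $n\ge0$ (such $\pi$, $C_1$, $C_2$ exist under (A3)). Fix $\varepsilon>0$, $\delta\in(0,1)$ and an $\varepsilon$-ASEM algorithm $\mathcal{A}^\varepsilon$ for $\mathscr{H}$. Then for any initial distribution $\mu$ of $\{Z_n\}_{n\ge0}$, $$\mathbb{P}_\mu\Big(\big|\mathrm{er}_\pi\big(\mathcal{A}^\varepsilon(Z_0,\dots,Z_{n-1})\big)-\mathrm{opt}_\pi(\mathscr{H})\big|<5\varepsilon\Big)\ge1-\delta\qquad\text{for all } n\ge n_1(\varepsilon,\delta),$$ where $$n_1(\varepsilon,\delta):=\max\left\{\frac{16C_1L}{\varepsilon(1-\mathrm{e}^{-C_2})},\ \frac{128C_1^2L^2\ln\frac{\mathcal{N}(\varepsilon/4\bar L,\mathscr{H},\rho_\mathscr{H})}{\delta}}{\varepsilon^2(1-\mathrm{e}^{-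C_2})^2}\right\}.$$
   Context: The Markov chain is understood as a family $(\Omega,\mathcal{F},\mathbb{P}_z,\{Z_n\}_{n\ge0})_{z\in\mathsf{Z}}$ with $\mathbb{P}_z(Z_0=z)=1$; for a probability measure $\mu$ on $\mathsf{Z}$, $\mathbb{P}_\mu:=\int\mathbb{P}_z\,\mu(\mathrm{d}z)$. $\mathcal{P}^n$ is the $n$-step kernel. Total boundedness means: for each $\epsilon>0$ there is a finite $\mathscr{H}_\epsilon\subseteq\mathscr{H}$ such that every $h\in\mathscr{H}$ has some $h_\epsilon\in\mathscr{H}_\epsilon$ with $\rho_\mathscr{H}(h,h_\epsilon)<\epsilon$ (an $\epsilon$-covering); $\mathcal{N}(\epsilon,\mathscr{H},\rho_\mathscr{H})$ is the minimal cardinality of such an $\epsilon$-covering. $\mathscr{W}$ is the $L^1$-Wasserstein distance on probability measures on $\mathsf{Z}$: $\mathscr{W}(\mu_1,\mu_2)=\inf_{\Pi}\int\rho(z,\bar z)\,\Pi(\mathrm{d}z,\mathrm{d}\bar z)$, infimum over couplings $\Pi$ of $\mu_1,\mu_2$. Notation: $\mathrm{er}_\pi(h):=\int\ell_h\,\mathrm{d}\pi$, $\mathrm{opt}_\pi(\mathscr{H}):=\inf_{h\in\mathscr{H}}\mathrm{er}_\pi(h)$. For $\varepsilon>0$, an $\varepsilon$-ASEM (approximate sample error minimization) algorithm for $\mathscr{H}$ is a map $\mathcal{A}^\varepsilon:\bigcup_{n\ge1}\mathsf{Z}^n\to\mathscr{H}$ such that for all $n$ and $z_0,\dots,z_{n-1}\in\mathsf{Z}$,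 $\frac1n\sum_{i=0}^{n-1}\ell_{\mathcal{A}^\varepsilon(z_0,\dots,z_{n-1})}(z_i)<\inf_{h\in\mathscr{H}}\frac1n\sum_{i=0}^{n-1}\ell_h(z_i)+\varepsilon$. *)

theory Defs
  imports "HOL-Probability.Probability"
begin

definition borel_of_top :: "'a topology \<Rightarrow> 'a measure" where
  "borel_of_top T = sigma (topspace T) {U. openin T U}"

definition couplings :: "'a measure \<Rightarrow> 'a measure \<Rightarrow> 'a measure \<Rightarrow> ('a \<times> 'a) measure set" where
  "couplings S m1 m2 = {Q. prob_space Q \<and> sets Q = sets (S \<Otimes>\<^sub>M S)
      \<and> distr Q S fst = m1 \<and> distr Q S snd = m2}"

definition wasserstein :: "'a measure \<Rightarrow> ('a \<Rightarrow> 'a \<Rightarrow> real) \<Rightarrow> 'a measure \<Rightarrow> 'a measure \<Rightarrow> ennreal" where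
  "wasserstein S \<rho> m1 m2 = (INF Q\<in>couplings S m1 m2. \<integral>\<^sup>+ p. ennreal (\<rho> (fst p) (snd p)) \<partial>Q)"

fun kernel_pow :: "'a measure \<Rightarrow> ('a \<Rightarrow> 'a measure) \<Rightarrow> nat \<Rightarrow> 'a \<Rightarrow> 'a measure" where
  "kernel_pow S K 0 z = return S z"
| "kernel_pow S K (Suc n) z = bind (kernel_pow S K n z) K"

(* joint law of (Z_0,...,Z_{n-1}) under P_mu, as a measure on PiM {..<n} *)
fun chain_law :: "'a measure \<Rightarrow> ('a \<Rightarrow> 'a measure) \<Rightarrow> 'a measure \<Rightarrow> nat \<Rightarrow> (nat \<Rightarrow> 'a) measure" where
  "chain_law S K \<mu> 0 = return (PiM {} (\<lambda>_. S)) (\<lambda>_. undefined)"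
| "chain_law S K \<mu> (Suc n) = bind (chain_law S K \<mu> n)
     (\<lambda>\<omega>. distr (if n = 0 then \<mu> else K (\<omega> (n - 1))) (PiM {..<Suc n} (\<lambda>_. S)) (fun_upd \<omega> n))"

(* covering number N(r, H, d); radius in ereal so that r = \<infinity> is allowed *)
definition covering_number :: "('h \<Rightarrow> 'h \<Rightarrow> real) \<Rightarrow> 'h set \<Rightarrow> ereal \<Rightarrow> nat" where
  "covering_number d H r = (LEAST k. \<exists>F. finite F \<and> F \<subseteq> H \<and> card F = k
      \<and> (\<forall>h\<in>H. \<exists>g\<in>F. ereal (d h g) < r))"

definition loss_h :: "(real \<Rightarrow> real \<Rightarrow> real) \<Rightarrow> ('x \<Rightarrow> real) \<Rightarrow> 'x \<times> real \<Rightarrow> real" where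
  "loss_h lo h z = lo (h (fst z)) (snd z)"

definition er :: "('x \<times> real) measure \<Rightarrow> (real \<Rightarrow> real \<Rightarrow> real) \<Rightarrow> ('x \<Rightarrow> real) \<Rightarrow> real" where
  "er \<pi> lo h = (\<integral>z. loss_h lo h z \<partial>\<pi>)"

definition opt :: "('x \<times> real) measure \<Rightarrow> (real \<Rightarrow> real \<Rightarrow> real) \<Rightarrow> ('x \<Rightarrow> real) set \<Rightarrow> real" where
  "opt \<pi> lo H = (INF h\<in>H. er \<pi> lo h)"

definition ASEM :: "real \<Rightarrow> ('x \<times> real) set \<Rightarrow> (real \<Rightarrow> real \<Rightarrow> real) \<Rightarrow> ('x \<Rightarrow> real) set
     \<Rightarrow> (('x \<times> real) list \<Rightarrow> ('x \<Rightarrow> real)) \<Rightarrow> bool" where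
  "ASEM \<epsilon> Zs lo H A \<longleftrightarrow> (\<forall>zs. zs \<noteq> [] \<and> set zs \<subseteq> Zs \<longrightarrow>
      A zs \<in> H \<and>
      (\<Sum>z\<leftarrow>zs. loss_h lo (A zs) z) / real (length zs)
        < (INF h\<in>H. (\<Sum>z\<leftarrow>zs. loss_h lo h z) / real (length zs)) + \<epsilon>)"

end

theory Submission
  imports Defs
begin

text \<open>
  Fix a hypothesis \<open>h\<close> and let \<open>G r = \<Sum>k<r. P\<^sup>k \<ell>\<^sub>h\<close>. The partial sum
  \<open>\<Sum>i<n. \<ell>\<^sub>h (Z i)\<close> equals \<open>G n (Z 0)\<close> plus the martingale increments
  \<open>G (n - j) (Z j) - (P G (n - j)) (Z (j - 1))\<close>, \<open>1 \<le> j < n\<close>. Lipschitz continuity of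
  \<open>\<ell>\<^sub>h\<close> and the Wasserstein convergence give \<open>|P\<^sup>k \<ell>\<^sub>h - er\<^sub>\<pi> h| \<le> L C1 e\<^sup>-\<^sup>C\<^sup>2\<^sup>k\<close>, so
  \<open>G r\<close> stays within \<open>a = L C1 / (1 - e\<^sup>-\<^sup>C\<^sup>2)\<close> of \<open>r er\<^sub>\<pi> h\<close>: every increment is
  conditionally centred and confined to an interval of length \<open>2 a\<close>. Hoeffding's lemma, applied
  one step at a time, gives a sub-Gaussian tail for the partial sum. A union bound over a minimal
  \<open>\<epsilon> / (4 Lb)\<close>-net of \<open>H\<close>, together with the Lipschitz dependence of \<open>\<ell>\<^sub>h\<close> on \<open>h\<close>,
  makes the empirical risk uniformly \<open>25 \<epsilon> / 16\<close>-close to \<open>er\<^sub>\<pi>\<close> on \<open>H\<close> with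
  probability at least \<open>1 - \<delta>\<close>, and an \<open>\<epsilon>\<close>-approximate empirical minimiser then has excess
  risk at most \<open>\<epsilon> + 2 \<cdot> 25 \<epsilon> / 16 < 5 \<epsilon>\<close>.

  Completeness, separability, (A3), the measurability conditions on the projections and on the
  loss, and the invariance of \<open>\<pi>\<close> only guarantee the existence of \<open>\<pi>\<close>, \<open>C1\<close> and
  \<open>C2\<close>; they are not used below.
\<close>

lemma (in prob_space) integrable_abs_integral_le:
  fixes f :: "'a \<Rightarrow> real"
  assumes f: "f \<in> borel_measurable M" and bound: "\<And>x. x \<in> space M \<Longrightarrow> \<bar>f x\<bar> \<le> B"
  shows "integrable M f" and "\<bar>\<integral>x. f x \<partial>M\<bar> \<le> B"
proof -
  show int: "integrable M f"
    by (rule integrable_const_bound[where B = B]) (use f bound in auto)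
  have "\<bar>\<integral>x. f x \<partial>M\<bar> \<le> (\<integral>x. \<bar>f x\<bar> \<partial>M)"
    using integral_norm_bound[of M f] by simp
  also have "\<dots> \<le> B"
    by (rule integral_le_const) (use int bound in auto)
  finally show "\<bar>\<integral>x. f x \<partial>M\<bar> \<le> B" .
qed

lemma (in prob_space) prob_diff_UN_ge:
  assumes "finite I" and "\<And>i. i \<in> I \<Longrightarrow> A i \<in> events" and "\<And>i. i \<in> I \<Longrightarrow> prob (A i) \<le> p"
  shows "1 - real (card I) * p \<le> prob (space M - (\<Union>i\<in>I. A i))"
proof -
  have "prob (\<Union>i\<in>I. A i) \<le> (\<Sum>i\<in>I. prob (A i))"
    using assms by (intro finite_measure_subadditive_finite) auto
  also have "\<dots> \<le> real (card I) * p"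
    using sum_mono[of I "\<lambda>i. prob (A i)" "\<lambda>_. p"] assms(3) by simp
  moreover have "(\<Union>i\<in>I. A i) \<in> events"
    using assms(1,2) by blast
  ultimately show ?thesis
    using prob_compl[of "\<Union>i\<in>I. A i"] by simp
qed

lemma borel_measurable_continuous_map:
  assumes "continuous_map X euclidean f"
  shows "f \<in> borel_measurable (borel_of_top X)"
proof (rule borel_measurableI)
  fix U :: "'b set" assume "open U"
  then have "openin X {x \<in> topspace X. f x \<in> U}"
    using assms by (intro openin_continuous_map_preimage) auto
  moreover have "{U. openin X U} \<subseteq> Pow (topspace X)"
    by (auto dest: openin_subset)
  ultimately show "f -` U \<inter> space (borel_of_top X) \<in> sets (borel_of_top X)"
    unfolding borel_of_top_def
    by (auto simp: space_measure_of_conv sets_measure_of vimage_def Int_def conj_commute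
        intro: sigma_sets.Basic)
qed

lemma (in Metric_space) continuous_map_euclidean_if_Lipschitz:
  fixes f :: "'a \<Rightarrow> real"
  assumes L: "0 \<le> L" and lip: "\<And>x y. x \<in> M \<Longrightarrow> y \<in> M \<Longrightarrow> \<bar>f x - f y\<bar> \<le> L * d x y"
  shows "continuous_map mtopology euclidean f"
  unfolding metric_continuous_map[OF Met_TC.Metric_space_axioms, simplified]
proof (intro ballI allI impI exI conjI)
  fix x e assume x: "x \<in> M" and e: "0 < (e :: real)"
  show "0 < e / (L + 1)" using e L by simp
  fix y assume y: "y \<in> M \<and> d x y < e / (L + 1)"
  have "\<bar>f x - f y\<bar> \<le> (L + 1) * d x y"
    using lip[of x y] x y nonneg[of x y] unfolding distrib_right mult_1_left by linarith
  also have "\<dots> < e"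
    using y L by (simp add: field_simps)
  finally show "dist (f x) (f y) < e" by (simp add: dist_real_def)
qed

lemma nn_integral_abs_le_cmult:
  fixes g h :: "'a \<Rightarrow> real"
  assumes g: "g \<in> borel_measurable M" and L: "0 \<le> L"
    and le: "\<And>x. x \<in> space M \<Longrightarrow> \<bar>g x\<bar> \<le> L * h x"
  shows "(\<integral>\<^sup>+x. \<bar>g x\<bar> \<partial>M) \<le> ennreal L * (\<integral>\<^sup>+x. ennreal (h x) \<partial>M)"
proof (cases "L = 0")
  case True
  then have "(\<integral>\<^sup>+x. \<bar>g x\<bar> \<partial>M) = (\<integral>\<^sup>+x. 0 \<partial>M)"
    using le by (intro nn_integral_cong) force
  then show ?thesis by simp
next
  case False
  then have L_pos: "0 < L" using L by simp
  \<comment> \<open>\<open>h\<close> need not be measurable, so \<open>L\<close> is pulled out on the measurable side.\<close>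
  have "(\<integral>\<^sup>+x. \<bar>g x\<bar> \<partial>M) = (\<integral>\<^sup>+x. ennreal L * ennreal (\<bar>g x\<bar> / L) \<partial>M)"
    using L_pos by (intro nn_integral_cong) (simp flip: ennreal_mult')
  also have "\<dots> = ennreal L * (\<integral>\<^sup>+x. ennreal (\<bar>g x\<bar> / L) \<partial>M)"
    using g by (intro nn_integral_cmult) simp
  also have "\<dots> \<le> ennreal L * (\<integral>\<^sup>+x. ennreal (h x) \<partial>M)"
    using le L_pos by (intro mult_left_mono nn_integral_mono ennreal_leI) (auto simp: field_simps)
  finally show ?thesis .
qed

lemma abs_integral_diff_le_coupling:
  fixes f :: "'a \<Rightarrow> real" and \<rho> :: "'a \<Rightarrow> 'a \<Rightarrow> real"
  assumes Q: "Q \<in> couplings S m1 m2"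
    and f: "f \<in> borel_measurable S" and bound: "\<And>x. x \<in> space S \<Longrightarrow> \<bar>f x\<bar> \<le> B"
    and lip: "\<And>x y. x \<in> space S \<Longrightarrow> y \<in> space S \<Longrightarrow> \<bar>f x - f y\<bar> \<le> L * \<rho> x y"
    and L: "0 \<le> L" and cost: "(\<integral>\<^sup>+p. ennreal (\<rho> (fst p) (snd p)) \<partial>Q) \<le> ennreal r" and r: "0 \<le> r"
  shows "\<bar>(\<integral>x. f x \<partial>m1) - (\<integral>x. f x \<partial>m2)\<bar> \<le> L * r"
proof -
  from Q have Qp: "prob_space Q" and Qs: "sets Q = sets (S \<Otimes>\<^sub>M S)"
    and Q1: "distr Q S fst = m1" and Q2: "distr Q S snd = m2"
    unfolding couplings_def by auto
  interpret Q: prob_space Q by (rule Qp)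
  have space_Q: "space Q = space S \<times> space S"
    using sets_eq_imp_space_eq[OF Qs] by (simp add: space_pair_measure)
  have fst: "fst \<in> Q \<rightarrow>\<^sub>M S" and snd: "snd \<in> Q \<rightarrow>\<^sub>M S"
    unfolding measurable_cong_sets[OF Qs refl] by simp_all
  have int1: "integrable Q (\<lambda>p. f (fst p))" and int2: "integrable Q (\<lambda>p. f (snd p))"
    using measurable_compose[OF fst f] measurable_compose[OF snd f] bound
    by (auto simp: space_Q intro!: Q.integrable_abs_integral_le(1))
  have "(\<integral>x. f x \<partial>m1) - (\<integral>x. f x \<partial>m2) = (\<integral>p. f (fst p) - f (snd p) \<partial>Q)"
    using int1 int2 integral_distr[OF fst f] integral_distr[OF snd f] by (simp add: Q1 Q2)
  then have "ennreal \<bar>(\<integral>x. f x \<partial>m1) - (\<integral>x. f x \<partial>m2)\<bar> \<le> (\<integral>\<^sup>+p. \<bar>f (fst p) - f (snd p)\<bar> \<partial>Q)"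
    using integral_norm_bound_ennreal[of Q "\<lambda>p. f (fst p) - f (snd p)"] int1 int2 by simp
  also have "\<dots> \<le> ennreal L * (\<integral>\<^sup>+p. ennreal (\<rho> (fst p) (snd p)) \<partial>Q)"
    using measurable_compose[OF fst f] measurable_compose[OF snd f] lip L
    by (intro nn_integral_abs_le_cmult) (auto simp: space_Q)
  also have "\<dots> \<le> ennreal (L * r)"
    using cost L by (simp add: ennreal_mult' mult_left_mono)
  finally show ?thesis
    using L r by (simp add: ennreal_le_iff)
qed

lemma abs_integral_diff_le_wasserstein:
  fixes f :: "'a \<Rightarrow> real" and \<rho> :: "'a \<Rightarrow> 'a \<Rightarrow> real"
  assumes f: "f \<in> borel_measurable S" and bound: "\<And>x. x \<in> space S \<Longrightarrow> \<bar>f x\<bar> \<le> B"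
    and lip: "\<And>x y. x \<in> space S \<Longrightarrow> y \<in> space S \<Longrightarrow> \<bar>f x - f y\<bar> \<le> L * \<rho> x y"
    and L: "0 \<le> L" and W: "wasserstein S \<rho> m1 m2 \<le> ennreal w" and w: "0 \<le> w"
  shows "\<bar>(\<integral>x. f x \<partial>m1) - (\<integral>x. f x \<partial>m2)\<bar> \<le> L * w"
proof (rule field_le_epsilon)
  fix e :: real assume e: "0 < e"
  define e' where "e' = e / (L + 1)"
  have e': "0 < e'" using e L by (simp add: e'_def)
  have "wasserstein S \<rho> m1 m2 < ennreal (w + e')"
    using W e' w by (meson ennreal_lessI le_less_trans less_add_same_cancel1 add_pos_nonneg
        order.strict_trans1)
  then obtain Q where Q: "Q \<in> couplings S m1 m2"
    and cost: "(\<integral>\<^sup>+p. ennreal (\<rho> (fst p) (snd p)) \<partial>Q) \<le> ennreal (w + e')"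
    unfolding wasserstein_def by (auto simp: INF_less_iff less_imp_le)
  have "\<bar>(\<integral>x. f x \<partial>m1) - (\<integral>x. f x \<partial>m2)\<bar> \<le> L * (w + e')"
    using e' w by (intro abs_integral_diff_le_coupling[OF Q f bound lip L cost]) auto
  also have "\<dots> \<le> L * w + e"
    using L e by (simp add: e'_def distrib_left field_simps)
  finally show "\<bar>(\<integral>x. f x \<partial>m1) - (\<integral>x. f x \<partial>m2)\<bar> \<le> L * w + e" .
qed

lemma abs_diff_INF_le:
  fixes f :: "'h \<Rightarrow> real"
  assumes hs: "hs \<in> H" and bdd: "bdd_below (f ` H)" and near: "\<And>h. h \<in> H \<Longrightarrow> f hs \<le> f h + e"
  shows "\<bar>f hs - (INF h\<in>H. f h)\<bar> \<le> e"
proof -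
  have "(INF h\<in>H. f h) \<le> f hs" by (rule cINF_lower[OF bdd hs])
  moreover have "f hs - e \<le> (INF h\<in>H. f h)"
    using hs near by (intro cINF_greatest) (auto simp: algebra_simps)
  ultimately show ?thesis by (simp add: abs_le_iff)
qed

lemma approx_minimizer_excess_risk_le:
  fixes risk emp :: "'h \<Rightarrow> real"
  assumes hs: "hs \<in> H" and bdd: "bdd_below (risk ` H)"
    and approx_min: "emp hs < (INF h\<in>H. emp h) + \<epsilon>"
    and dev: "\<And>h. h \<in> H \<Longrightarrow> \<bar>emp h - risk h\<bar> \<le> d"
  shows "\<bar>risk hs - (INF h\<in>H. risk h)\<bar> \<le> \<epsilon> + 2 * d"
proof (rule abs_diff_INF_le[OF hs bdd])
  obtain m where m: "\<And>h. h \<in> H \<Longrightarrow> m \<le> risk h"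
    using bdd by (auto simp: bdd_below_def)
  have "bdd_below (emp ` H)"
    using m dev by (intro bdd_belowI2[where m = "m - d"]) (force simp: abs_le_iff)
  fix h assume h: "h \<in> H"
  have "(INF h\<in>H. emp h) \<le> emp h" by (rule cINF_lower[OF \<open>bdd_below (emp ` H)\<close> h])
  with approx_min dev[OF h] dev[OF hs] show "risk hs \<le> risk h + (\<epsilon> + 2 * d)"
    by (simp add: abs_le_iff)
qed

lemma covering_number_obtains_net:
  assumes H: "Metric_space H d" and tb: "Metric_space.mtotally_bounded H d H"
    and ne: "H \<noteq> {}" and r: "0 < r"
  obtains F where "finite F" "F \<subseteq> H" "card F = covering_number d H r"
    "\<And>h. h \<in> H \<Longrightarrow> \<exists>g\<in>F. ereal (d h g) < r"
proof -
  interpret Metric_space H d by (rule H)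
  have "\<exists>F. finite F \<and> F \<subseteq> H \<and> (\<forall>h\<in>H. \<exists>g\<in>F. ereal (d h g) < r)"
  proof (cases r)
    case (real r')
    then have "0 < r'" using r by simp
    from tb[unfolded mtotally_bounded_def, rule_format, OF this]
    obtain F where F: "finite F" "F \<subseteq> H" "H \<subseteq> (\<Union>g\<in>F. mball g r')"
      by blast
    have "\<exists>g\<in>F. ereal (d h g) < r" if h: "h \<in> H" for h
    proof -
      obtain g where "g \<in> F" "h \<in> mball g r'" using F(3) h by blast
      then show ?thesis using real by (auto simp: commute)
    qed
    with F show ?thesis by blast
  next
    case PInf
    with ne show ?thesis by (intro exI[of _ "{SOME h. h \<in> H}"]) (auto intro: someI)
  qed (use r in simp)
  then have "\<exists>k F. finite F \<and> F \<subseteq> H \<and> card F = k \<and> (\<forall>h\<in>H. \<exists>g\<in>F. ereal (d h g) < r)"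
    by blast
  from LeastI_ex[OF this] obtain F where "finite F" "F \<subseteq> H" "card F = covering_number d H r"
    "\<forall>h\<in>H. \<exists>g\<in>F. ereal (d h g) < r"
    unfolding covering_number_def by blast
  then show ?thesis by (intro that) auto
qed

lemma measurable_prod_consecutive:
  fixes \<psi> :: "nat \<Rightarrow> 'a \<Rightarrow> 'a \<Rightarrow> ennreal"
  assumes \<psi>: "\<And>j. (\<lambda>(x, y). \<psi> j x y) \<in> borel_measurable (S \<Otimes>\<^sub>M S)"
  shows "(\<lambda>\<omega>. \<Prod>j\<in>{1..<k}. \<psi> j (\<omega> (j - 1)) (\<omega> j)) \<in> borel_measurable (PiM {..<k} (\<lambda>_. S))"
proof -
  have "(\<lambda>\<omega>. \<psi> j (\<omega> (j - 1)) (\<omega> j)) \<in> borel_measurable (PiM {..<k} (\<lambda>_. S))" if "j < k" for j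
  proof -
    have "(\<lambda>\<omega>. (\<omega> (j - 1), \<omega> j)) \<in> PiM {..<k} (\<lambda>_. S) \<rightarrow>\<^sub>M S \<Otimes>\<^sub>M S"
      using that by (intro measurable_Pair measurable_component_singleton) auto
    from measurable_compose[OF this \<psi>] show ?thesis by simp
  qed
  then show ?thesis
    by (intro borel_measurable_prod_ennreal) auto
qed

lemma component_in_space_PiM: "\<omega> \<in> space (PiM I (\<lambda>_. S)) \<Longrightarrow> i \<in> I \<Longrightarrow> \<omega> i \<in> space S"
  by (auto simp: space_PiM)

locale markov_chain =
  fixes S :: "'a measure" and K :: "'a \<Rightarrow> 'a measure" and \<mu> :: "'a measure"
  assumes K[measurable]: "K \<in> S \<rightarrow>\<^sub>M prob_algebra S"
    and \<mu>: "\<mu> \<in> space (prob_algebra S)"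
begin

lemma chain_law_step_measurable:
  "(\<lambda>\<omega>. distr (if m = 0 then \<mu> else K (\<omega> (m - 1))) (PiM {..<Suc m} (\<lambda>_. S)) (fun_upd \<omega> m))
     \<in> PiM {..<m} (\<lambda>_. S) \<rightarrow>\<^sub>M prob_algebra (PiM {..<Suc m} (\<lambda>_. S))"
proof (rule measurable_distr_prob_space2)
  show "(\<lambda>\<omega>. if m = 0 then \<mu> else K (\<omega> (m - 1))) \<in> PiM {..<m} (\<lambda>_. S) \<rightarrow>\<^sub>M prob_algebra S"
  proof (cases "m = 0")
    case True then show ?thesis using \<mu> by simp
  next
    case False
    have "(\<lambda>\<omega>. \<omega> (m - 1)) \<in> PiM {..<m} (\<lambda>_. S) \<rightarrow>\<^sub>M S"
      using False by (intro measurable_component_singleton) auto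
    then have "(\<lambda>\<omega>. K (\<omega> (m - 1))) \<in> PiM {..<m} (\<lambda>_. S) \<rightarrow>\<^sub>M prob_algebra S"
      by (rule measurable_compose) (rule K)
    with False show ?thesis by simp
  qed
  show "(\<lambda>(x, y). x(m := y)) \<in> PiM {..<m} (\<lambda>_. S) \<Otimes>\<^sub>M S \<rightarrow>\<^sub>M PiM {..<Suc m} (\<lambda>_. S)"
    using measurable_add_dim[of m "{..<m}" "\<lambda>_. S"] by (simp add: lessThan_Suc)
qed

lemma chain_law_in_prob_algebra: "chain_law S K \<mu> m \<in> space (prob_algebra (PiM {..<m} (\<lambda>_. S)))"
proof (induction m)
  case 0
  show ?case by (simp add: space_prob_algebra prob_space_return)
next
  case (Suc m)
  show ?case
    using prob_space_bind'[OF Suc chain_law_step_measurable] sets_bind'[OF Suc chain_law_step_measurable]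
    by (simp add: space_prob_algebra)
qed

lemma sets_chain_law[measurable_cong]: "sets (chain_law S K \<mu> m) = sets (PiM {..<m} (\<lambda>_. S))"
  using chain_law_in_prob_algebra by (simp add: space_prob_algebra)

lemma space_chain_law: "space (chain_law S K \<mu> m) = space (PiM {..<m} (\<lambda>_. S))"
  using sets_chain_law by (rule sets_eq_imp_space_eq)

lemma prob_space_chain_law: "prob_space (chain_law S K \<mu> m)"
  using chain_law_in_prob_algebra by (simp add: space_prob_algebra)

lemma sets_K: "x \<in> space S \<Longrightarrow> sets (K x) = sets S"
  using measurable_space[OF K] by (simp add: space_prob_algebra)

lemma prob_space_K: "x \<in> space S \<Longrightarrow> prob_space (K x)"
  using measurable_space[OF K] by (simp add: space_prob_algebra)

lemma nn_integral_chain_law_Suc: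
  assumes F: "F \<in> borel_measurable (PiM {..<Suc m} (\<lambda>_. S))"
  shows "(\<integral>\<^sup>+\<omega>. F \<omega> \<partial>chain_law S K \<mu> (Suc m))
     = (\<integral>\<^sup>+\<omega>. (\<integral>\<^sup>+z. F (fun_upd \<omega> m z) \<partial>(if m = 0 then \<mu> else K (\<omega> (m - 1)))) \<partial>chain_law S K \<mu> m)"
proof -
  let ?next = "\<lambda>\<omega>. if m = 0 then \<mu> else K (\<omega> (m - 1))"
  let ?N = "\<lambda>\<omega>. distr (?next \<omega>) (PiM {..<Suc m} (\<lambda>_. S)) (fun_upd \<omega> m)"
  have N: "?N \<in> chain_law S K \<mu> m \<rightarrow>\<^sub>M subprob_algebra (PiM {..<Suc m} (\<lambda>_. S))"
    using measurable_prob_algebraD[OF chain_law_step_measurable[of m]]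
    by (simp add: measurable_cong_sets[OF sets_chain_law refl])
  have "(\<integral>\<^sup>+\<omega>. F \<omega> \<partial>chain_law S K \<mu> (Suc m)) = (\<integral>\<^sup>+\<omega>. (\<integral>\<^sup>+y. F y \<partial>?N \<omega>) \<partial>chain_law S K \<mu> m)"
    by (simp only: chain_law.simps) (rule nn_integral_bind[OF F N])
  also have "\<dots> = (\<integral>\<^sup>+\<omega>. (\<integral>\<^sup>+z. F (fun_upd \<omega> m z) \<partial>?next \<omega>) \<partial>chain_law S K \<mu> m)"
  proof (rule nn_integral_cong)
    fix \<omega> assume "\<omega> \<in> space (chain_law S K \<mu> m)"
    then have \<omega>: "\<omega> \<in> space (PiM {..<m} (\<lambda>_. S))" by (simp add: space_chain_law)
    have next_sets: "sets (?next \<omega>) = sets S"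
    proof (cases "m = 0")
      case False
      then have "\<omega> (m - 1) \<in> space S" by (intro component_in_space_PiM[OF \<omega>]) auto
      with False show ?thesis by (simp add: sets_K)
    qed (use \<mu> in \<open>simp add: space_prob_algebra\<close>)
    have upd: "fun_upd \<omega> m \<in> ?next \<omega> \<rightarrow>\<^sub>M PiM {..<Suc m} (\<lambda>_. S)"
      using measurable_Pair2[OF measurable_add_dim[of m "{..<m}" "\<lambda>_. S"] \<omega>]
      by (simp add: measurable_cong_sets[OF next_sets refl] lessThan_Suc)
    show "(\<integral>\<^sup>+y. F y \<partial>?N \<omega>) = (\<integral>\<^sup>+z. F (fun_upd \<omega> m z) \<partial>?next \<omega>)"
      by (rule nn_integral_distr[OF upd]) (simp add: F)
  qed
  finally show ?thesis .
qed

lemma nn_integral_chain_law_prod_Suc: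
  fixes \<psi> :: "nat \<Rightarrow> 'a \<Rightarrow> 'a \<Rightarrow> ennreal"
  assumes \<psi>: "\<And>j. (\<lambda>(x, y). \<psi> j x y) \<in> borel_measurable (S \<Otimes>\<^sub>M S)" and m: "1 \<le> m"
  shows "(\<integral>\<^sup>+\<omega>. (\<Prod>j\<in>{1..<Suc m}. \<psi> j (\<omega> (j - 1)) (\<omega> j)) \<partial>chain_law S K \<mu> (Suc m))
    = (\<integral>\<^sup>+\<omega>. (\<Prod>j\<in>{1..<m}. \<psi> j (\<omega> (j - 1)) (\<omega> j)) * (\<integral>\<^sup>+z. \<psi> m (\<omega> (m - 1)) z \<partial>K (\<omega> (m - 1)))
        \<partial>chain_law S K \<mu> m)"
proof -
  let ?P = "\<lambda>\<omega>. \<Prod>j\<in>{1..<m}. \<psi> j (\<omega> (j - 1)) (\<omega> j)"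
  have "(\<integral>\<^sup>+\<omega>. (\<Prod>j\<in>{1..<Suc m}. \<psi> j (\<omega> (j - 1)) (\<omega> j)) \<partial>chain_law S K \<mu> (Suc m))
    = (\<integral>\<^sup>+\<omega>. (\<integral>\<^sup>+z. (\<Prod>j\<in>{1..<Suc m}. \<psi> j ((fun_upd \<omega> m z) (j - 1)) ((fun_upd \<omega> m z) j))
         \<partial>K (\<omega> (m - 1))) \<partial>chain_law S K \<mu> m)"
    using m by (simp only: nn_integral_chain_law_Suc[OF measurable_prod_consecutive[OF \<psi>]]) simp
  also have "\<dots> = (\<integral>\<^sup>+\<omega>. ?P \<omega> * (\<integral>\<^sup>+z. \<psi> m (\<omega> (m - 1)) z \<partial>K (\<omega> (m - 1))) \<partial>chain_law S K \<mu> m)"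
  proof (rule nn_integral_cong)
    fix \<omega> assume "\<omega> \<in> space (chain_law S K \<mu> m)"
    then have x: "\<omega> (m - 1) \<in> space S"
      using m by (intro component_in_space_PiM[of \<omega> "{..<m}"]) (auto simp: space_chain_law)
    have "\<psi> m (\<omega> (m - 1)) \<in> borel_measurable (K (\<omega> (m - 1)))"
      using measurable_Pair2[OF \<psi>[of m] x] unfolding measurable_cong_sets[OF sets_K[OF x] refl] by simp
    moreover have "(\<Prod>j\<in>{1..<Suc m}. \<psi> j ((fun_upd \<omega> m z) (j - 1)) ((fun_upd \<omega> m z) j))
        = ?P \<omega> * \<psi> m (\<omega> (m - 1)) z" for z
    proof -
      have "{1..<Suc m} = insert m {1..<m}" using m by auto
      moreover have "(\<Prod>j\<in>{1..<m}. \<psi> j ((fun_upd \<omega> m z) (j - 1)) ((fun_upd \<omega> m z) j)) = ?P \<omega>"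
        by (intro prod.cong) auto
      moreover have "m - 1 \<noteq> m" using m by simp
      ultimately show ?thesis by (simp add: mult.commute)
    qed
    ultimately show "(\<integral>\<^sup>+z. (\<Prod>j\<in>{1..<Suc m}. \<psi> j ((fun_upd \<omega> m z) (j - 1)) ((fun_upd \<omega> m z) j))
         \<partial>K (\<omega> (m - 1))) = ?P \<omega> * (\<integral>\<^sup>+z. \<psi> m (\<omega> (m - 1)) z \<partial>K (\<omega> (m - 1)))"
      by (simp add: nn_integral_cmult)
  qed
  finally show ?thesis .
qed

lemma nn_integral_chain_law_prod_le:
  fixes \<psi> :: "nat \<Rightarrow> 'a \<Rightarrow> 'a \<Rightarrow> ennreal"
  assumes \<psi>: "\<And>j. (\<lambda>(x, y). \<psi> j x y) \<in> borel_measurable (S \<Otimes>\<^sub>M S)"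
    and one_step: "\<And>j x. x \<in> space S \<Longrightarrow> (\<integral>\<^sup>+y. \<psi> j x y \<partial>K x) \<le> \<beta>"
    and m: "1 \<le> m"
  shows "(\<integral>\<^sup>+\<omega>. (\<Prod>j\<in>{1..<m}. \<psi> j (\<omega> (j - 1)) (\<omega> j)) \<partial>chain_law S K \<mu> m) \<le> \<beta> ^ (m - 1)"
  using m
proof (induction m rule: dec_induct)
  case base
  interpret prob_space "chain_law S K \<mu> 1" by (rule prob_space_chain_law)
  show ?case using emeasure_space_1 by (simp del: chain_law.simps)
next
  case (step m)
  let ?P = "\<lambda>\<omega>. \<Prod>j\<in>{1..<m}. \<psi> j (\<omega> (j - 1)) (\<omega> j)"
  have "(\<integral>\<^sup>+\<omega>. (\<Prod>j\<in>{1..<Suc m}. \<psi> j (\<omega> (j - 1)) (\<omega> j)) \<partial>chain_law S K \<mu> (Suc m))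
      = (\<integral>\<^sup>+\<omega>. ?P \<omega> * (\<integral>\<^sup>+z. \<psi> m (\<omega> (m - 1)) z \<partial>K (\<omega> (m - 1))) \<partial>chain_law S K \<mu> m)"
    by (rule nn_integral_chain_law_prod_Suc[OF \<psi> step(1)])
  also have "\<dots> \<le> (\<integral>\<^sup>+\<omega>. ?P \<omega> * \<beta> \<partial>chain_law S K \<mu> m)"
  proof (rule nn_integral_mono)
    fix \<omega> assume "\<omega> \<in> space (chain_law S K \<mu> m)"
    then have "\<omega> (m - 1) \<in> space S"
      using step(1) by (intro component_in_space_PiM[of \<omega> "{..<m}"]) (auto simp: space_chain_law)
    then show "?P \<omega> * (\<integral>\<^sup>+z. \<psi> m (\<omega> (m - 1)) z \<partial>K (\<omega> (m - 1))) \<le> ?P \<omega> * \<beta>"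
      by (intro mult_left_mono one_step) auto
  qed
  also have "\<dots> = (\<integral>\<^sup>+\<omega>. ?P \<omega> \<partial>chain_law S K \<mu> m) * \<beta>"
    by (rule nn_integral_multc)
      (simp only: measurable_cong_sets[OF sets_chain_law refl] measurable_prod_consecutive[OF \<psi>])
  also have "\<dots> \<le> \<beta> ^ (m - 1) * \<beta>"
    by (intro mult_right_mono step.IH) auto
  also have "\<dots> = \<beta> ^ (Suc m - 1)"
    using step(1) by (cases m) (auto simp: mult.commute)
  finally show ?case .
qed

lemma kernel_pow_measurable: "kernel_pow S K k \<in> S \<rightarrow>\<^sub>M prob_algebra S"
proof (induction k)
  case 0
  have "kernel_pow S K 0 = return S" by (rule ext) simp
  then show ?case by simp
next
  case (Suc k)
  have "kernel_pow S K (Suc k) = (\<lambda>z. bind (kernel_pow S K k z) K)" by (rule ext) simp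
  then show ?case using measurable_bind_prob_space[OF Suc K] by simp
qed

lemma kernel_pow_in_prob_algebra: "z \<in> space S \<Longrightarrow> kernel_pow S K k z \<in> space (prob_algebra S)"
  by (rule measurable_space[OF kernel_pow_measurable])

lemma kernel_pow_Suc_left: "z \<in> space S \<Longrightarrow> kernel_pow S K (Suc k) z = bind (K z) (kernel_pow S K k)"
proof (induction k arbitrary: z)
  case 0
  have "kernel_pow S K 0 = return S" by (rule ext) simp
  then show ?case
    using bind_return[OF measurable_prob_algebraD[OF K] 0] bind_return''[OF sets_K[OF 0]] by simp
next
  case (Suc k)
  have M: "kernel_pow S K k \<in> K z \<rightarrow>\<^sub>M subprob_algebra S"
    using measurable_prob_algebraD[OF kernel_pow_measurable]
    by (simp add: measurable_cong_sets[OF sets_K[OF Suc.prems] refl])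
  have "kernel_pow S K (Suc (Suc k)) z = bind (bind (K z) (kernel_pow S K k)) K"
    using Suc by simp
  also have "\<dots> = bind (K z) (\<lambda>w. bind (kernel_pow S K k w) K)"
    by (rule bind_assoc[OF M measurable_prob_algebraD[OF K]])
  finally show ?case by simp
qed

lemma integrable_K:
  fixes g :: "'a \<Rightarrow> real"
  assumes x: "x \<in> space S" and g: "g \<in> borel_measurable S" and bound: "\<And>z. z \<in> space S \<Longrightarrow> \<bar>g z\<bar> \<le> B"
  shows "integrable (K x) g"
proof -
  interpret prob_space "K x" by (rule prob_space_K[OF x])
  show ?thesis
    using g bound sets_eq_imp_space_eq[OF sets_K[OF x]]
    by (intro integrable_abs_integral_le(1)) (simp_all add: measurable_cong_sets[OF sets_K[OF x] refl])
qed

end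

locale geom_ergodic_observable = markov_chain +
  fixes f :: "'a \<Rightarrow> real" and c b q :: real
  assumes f_measurable[measurable]: "f \<in> borel_measurable S"
    and f_bounded: "\<exists>B. \<forall>z\<in>space S. \<bar>f z\<bar> \<le> B"
    and mean_conv: "\<And>k z. z \<in> space S \<Longrightarrow> \<bar>(\<integral>x. f x \<partial>kernel_pow S K k z) - c\<bar> \<le> b * q ^ k"
    and q: "0 \<le> q" "q < 1" and b: "0 \<le> b"
begin

definition mean_after :: "nat \<Rightarrow> 'a \<Rightarrow> real" where
  "mean_after k z = (\<integral>x. f x \<partial>kernel_pow S K k z)"

text \<open>\<open>poisson_sum r z - r * c\<close> truncates the series \<open>\<Sum>k. P\<^sup>k (f - c)\<close>, which solves the
  Poisson equation \<open>g - P g = f - c\<close>; by \<open>integral_poisson_sum_K\<close>,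
  \<open>mart_incr r x y = g y - (P g) x\<close> for \<open>g = poisson_sum r\<close>.\<close>

definition poisson_sum :: "nat \<Rightarrow> 'a \<Rightarrow> real" where
  "poisson_sum r z = (\<Sum>k<r. mean_after k z)"

definition mart_incr :: "nat \<Rightarrow> 'a \<Rightarrow> 'a \<Rightarrow> real" where
  "mart_incr r x y = poisson_sum r y - poisson_sum (Suc r) x + f x"

definition poisson_bound :: real where
  "poisson_bound = b / (1 - q)"

lemma mean_after_measurable[measurable]: "mean_after k \<in> borel_measurable S"
  unfolding mean_after_def[abs_def]
  by (rule measurable_compose[OF measurable_prob_algebraD[OF kernel_pow_measurable]
        integral_measurable_subprob_algebra[OF f_measurable]])

lemma poisson_sum_measurable[measurable]: "poisson_sum r \<in> borel_measurable S"
  unfolding poisson_sum_def[abs_def] by measurable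

lemma mean_after_bounded:
  assumes z: "z \<in> space S" and bound: "\<And>x. x \<in> space S \<Longrightarrow> \<bar>f x\<bar> \<le> B"
  shows "\<bar>mean_after k z\<bar> \<le> B"
proof -
  have sets_eq: "sets (kernel_pow S K k z) = sets S"
    using kernel_pow_in_prob_algebra[OF z] by (simp add: space_prob_algebra)
  interpret prob_space "kernel_pow S K k z"
    using kernel_pow_in_prob_algebra[OF z] by (simp add: space_prob_algebra)
  show ?thesis
    unfolding mean_after_def using bound sets_eq_imp_space_eq[OF sets_eq]
    by (intro integrable_abs_integral_le(2)) (simp_all add: measurable_cong_sets[OF sets_eq refl])
qed

lemma mean_after_0: "z \<in> space S \<Longrightarrow> mean_after 0 z = f z"
  unfolding mean_after_def by (simp add: integral_return)

lemma integral_mean_after_K: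
  assumes z: "z \<in> space S"
  shows "(\<integral>x. mean_after k x \<partial>K z) = mean_after (Suc k) z"
proof -
  obtain B where bound: "\<And>x. x \<in> space S \<Longrightarrow> \<bar>f x\<bar> \<le> B" using f_bounded by blast
  interpret Kz: prob_space "K z" by (rule prob_space_K[OF z])
  have N: "kernel_pow S K k \<in> K z \<rightarrow>\<^sub>M subprob_algebra S"
    using measurable_prob_algebraD[OF kernel_pow_measurable]
    by (simp add: measurable_cong_sets[OF sets_K[OF z] refl])
  have "mean_after (Suc k) z = (\<integral>x. f x \<partial>bind (K z) (kernel_pow S K k))"
    unfolding mean_after_def kernel_pow_Suc_left[OF z] ..
  also have "\<dots> = (\<integral>x. (\<integral>y. f y \<partial>kernel_pow S K k x) \<partial>K z)"
  proof (rule integral_bind[OF f_measurable bound N])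
    show "finite_measure (K z)" by (rule Kz.finite_measure_axioms)
    show "AE x in K z. emeasure (kernel_pow S K k x) (space (kernel_pow S K k x)) \<le> ennreal 1"
    proof (rule AE_I2)
      fix x assume "x \<in> space (K z)"
      then have "x \<in> space S" using sets_eq_imp_space_eq[OF sets_K[OF z]] by simp
      then have "prob_space (kernel_pow S K k x)"
        using kernel_pow_in_prob_algebra by (simp add: space_prob_algebra)
      then show "emeasure (kernel_pow S K k x) (space (kernel_pow S K k x)) \<le> ennreal 1"
        by (simp add: prob_space.emeasure_space_1)
    qed
  qed
  finally show ?thesis unfolding mean_after_def by simp
qed

lemma poisson_sum_dev_le:
  assumes z: "z \<in> space S"
  shows "\<bar>poisson_sum r z - real r * c\<bar> \<le> poisson_bound"
proof -
  have "\<bar>poisson_sum r z - real r * c\<bar> = \<bar>\<Sum>k<r. mean_after k z - c\<bar>"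
    unfolding poisson_sum_def by (simp add: sum_subtractf)
  also have "\<dots> \<le> (\<Sum>k<r. \<bar>mean_after k z - c\<bar>)"
    by (rule sum_abs)
  also have "\<dots> \<le> b * (\<Sum>k<r. q ^ k)"
    unfolding sum_distrib_left by (intro sum_mono) (use mean_conv[OF z] in \<open>simp add: mean_after_def\<close>)
  also have "\<dots> \<le> b * (1 / (1 - q))"
  proof (intro mult_left_mono b)
    have "(\<Sum>k<r. q ^ k) = (q ^ r - 1) / (q - 1)"
      using q by (subst geometric_sum) auto
    also have "\<dots> = (1 - q ^ r) / (1 - q)"
      by (metis divide_minus_left divide_minus_right minus_diff_eq)
    also have "\<dots> \<le> 1 / (1 - q)" using q by (intro divide_right_mono) auto
    finally show "(\<Sum>k<r. q ^ k) \<le> 1 / (1 - q)" .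
  qed
  finally show ?thesis by (simp add: poisson_bound_def)
qed

lemma integral_poisson_sum_K:
  assumes x: "x \<in> space S"
  shows "(\<integral>y. poisson_sum r y \<partial>K x) = poisson_sum (Suc r) x - f x"
proof -
  obtain B where bound: "\<And>z. z \<in> space S \<Longrightarrow> \<bar>f z\<bar> \<le> B" using f_bounded by blast
  have "(\<integral>y. poisson_sum r y \<partial>K x) = (\<Sum>k<r. (\<integral>y. mean_after k y \<partial>K x))"
    unfolding poisson_sum_def
    by (intro Bochner_Integration.integral_sum
        integrable_K[OF x mean_after_measurable mean_after_bounded[OF _ bound]])
  also have "\<dots> = (\<Sum>k<r. mean_after (Suc k) x)" using integral_mean_after_K[OF x] by simp
  also have "\<dots> = poisson_sum (Suc r) x - f x"
    unfolding poisson_sum_def sum.lessThan_Suc_shift using mean_after_0[OF x] by simp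
  finally show ?thesis .
qed

lemma nn_integral_exp_mart_incr_le:
  assumes x: "x \<in> space S" and l: "0 < l" and A: "poisson_bound \<le> A"
  shows "(\<integral>\<^sup>+y. ennreal (exp (l * mart_incr r x y)) \<partial>K x) \<le> ennreal (exp (l\<^sup>2 * A\<^sup>2 / 2))"
proof -
  have space_Kx: "space (K x) = space S" by (rule sets_eq_imp_space_eq[OF sets_K[OF x]])
  have "AE y in K x. poisson_sum r y \<in> {real r * c - A..real r * c + A}"
  proof (rule AE_I2)
    fix y assume "y \<in> space (K x)"
    then have "\<bar>poisson_sum r y - real r * c\<bar> \<le> poisson_bound"
      by (simp add: space_Kx poisson_sum_dev_le)
    with A show "poisson_sum r y \<in> {real r * c - A..real r * c + A}"
      unfolding atLeastAtMost_iff abs_le_iff by linarith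
  qed
  then interpret interval_bounded_random_variable "K x" "poisson_sum r" "real r * c - A" "real r * c + A"
    using prob_space_K[OF x]
    unfolding interval_bounded_random_variable_def interval_bounded_random_variable_axioms_def
    by (simp add: measurable_cong_sets[OF sets_K[OF x] refl])
  have "(\<integral>\<^sup>+y. ennreal (exp (l * (poisson_sum r y - (\<integral>y. poisson_sum r y \<partial>K x)))) \<partial>K x)
      \<le> ennreal (exp (l\<^sup>2 * ((real r * c + A) - (real r * c - A))\<^sup>2 / 8))"
    by (rule Hoeffdings_lemma_nn_integral[OF l])
  also have "l\<^sup>2 * ((real r * c + A) - (real r * c - A))\<^sup>2 / 8 = l\<^sup>2 * A\<^sup>2 / 2"
    by (simp add: power2_eq_square field_simps)
  finally show ?thesis
    by (simp add: integral_poisson_sum_K[OF x] mart_incr_def algebra_simps)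
qed

lemma sum_eq_poisson_sum_plus_mart_incr:
  assumes n: "1 \<le> n" and \<omega>: "\<And>i. i < n \<Longrightarrow> \<omega> i \<in> space S"
  shows "(\<Sum>i<n. f (\<omega> i)) = poisson_sum n (\<omega> 0) + (\<Sum>j\<in>{1..<n}. mart_incr (n - j) (\<omega> (j - 1)) (\<omega> j))"
proof -
  have partial: "poisson_sum n (\<omega> 0) + (\<Sum>j\<in>{1..<m}. mart_incr (n - j) (\<omega> (j - 1)) (\<omega> j))
      = (\<Sum>i<m - 1. f (\<omega> i)) + poisson_sum (n - m + 1) (\<omega> (m - 1))" if "1 \<le> m" "m \<le> n" for m
    using that
  proof (induction m rule: dec_induct)
    case base then show ?case using n by simp
  next
    case (step m)
    have "{1..<Suc m} = insert m {1..<m}" using step(1) by auto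
    then have "poisson_sum n (\<omega> 0) + (\<Sum>j\<in>{1..<Suc m}. mart_incr (n - j) (\<omega> (j - 1)) (\<omega> j))
        = (\<Sum>i<m - 1. f (\<omega> i)) + poisson_sum (n - m + 1) (\<omega> (m - 1))
          + mart_incr (n - m) (\<omega> (m - 1)) (\<omega> m)"
      using step by simp
    also have "\<dots> = (\<Sum>i<m - 1. f (\<omega> i)) + f (\<omega> (m - 1)) + poisson_sum (n - m) (\<omega> m)"
      unfolding mart_incr_def using step by (simp add: Suc_diff_le)
    also have "(\<Sum>i<m - 1. f (\<omega> i)) + f (\<omega> (m - 1)) = (\<Sum>i<Suc m - 1. f (\<omega> i))"
      using step(1) by (cases m) auto
    also have "n - m = n - Suc m + 1" using step by simp
    finally show ?case by simp
  qed
  have "poisson_sum 1 (\<omega> (n - 1)) = f (\<omega> (n - 1))"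
    unfolding poisson_sum_def using mean_after_0[OF \<omega>[of "n - 1"]] n by simp
  then show ?thesis using partial[OF n order_refl] n by (cases n) auto
qed

lemma partial_sum_measurable[measurable]:
  "(\<lambda>\<omega>. \<Sum>i<n. f (\<omega> i)) \<in> borel_measurable (PiM {..<n} (\<lambda>_. S))"
proof -
  have "(\<lambda>\<omega>. f (\<omega> i)) \<in> borel_measurable (PiM {..<n} (\<lambda>_. S))" if "i < n" for i
    using that by (intro measurable_compose[OF measurable_component_singleton[of i] f_measurable]) auto
  then show ?thesis by (intro borel_measurable_sum) auto
qed

lemma mart_incr_sum_ge:
  assumes n: "1 \<le> n" and \<omega>: "\<And>i. i < n \<Longrightarrow> \<omega> i \<in> space S"
    and ge: "poisson_bound + t \<le> (\<Sum>i<n. f (\<omega> i)) - real n * c"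
  shows "t \<le> (\<Sum>j\<in>{1..<n}. mart_incr (n - j) (\<omega> (j - 1)) (\<omega> j))"
proof -
  have "poisson_sum n (\<omega> 0) \<le> real n * c + poisson_bound"
    using poisson_sum_dev_le[OF \<omega>[of 0], of n] n by (simp add: abs_le_iff)
  with ge show ?thesis
    using sum_eq_poisson_sum_plus_mart_incr[OF n \<omega>] by simp
qed

lemma emeasure_partial_sum_ge_le:
  assumes n: "1 \<le> n" and l: "0 < l" and A: "poisson_bound \<le> A"
  shows "emeasure (chain_law S K \<mu> n)
      {\<omega> \<in> space (PiM {..<n} (\<lambda>_. S)). poisson_bound + t \<le> (\<Sum>i<n. f (\<omega> i)) - real n * c}
    \<le> ennreal (exp (- l * t + real n * l\<^sup>2 * A\<^sup>2 / 2))"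
proof -
  let ?M = "chain_law S K \<mu> n"
  let ?E = "{\<omega> \<in> space (PiM {..<n} (\<lambda>_. S)). poisson_bound + t \<le> (\<Sum>i<n. f (\<omega> i)) - real n * c}"
  define \<psi> where "\<psi> j x y = ennreal (exp (l * mart_incr (n - j) x y))" for j x y
  define X where "X \<omega> = (\<Sum>j\<in>{1..<n}. mart_incr (n - j) (\<omega> (j - 1)) (\<omega> j))" for \<omega>
  have \<psi>: "(\<lambda>(x, y). \<psi> j x y) \<in> borel_measurable (S \<Otimes>\<^sub>M S)" for j
    unfolding \<psi>_def mart_incr_def by measurable
  have prod_eq: "(\<Prod>j\<in>{1..<n}. \<psi> j (\<omega> (j - 1)) (\<omega> j)) = ennreal (exp (l * X \<omega>))" for \<omega>
    unfolding \<psi>_def X_def by (simp add: prod_ennreal exp_sum sum_distrib_left)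
  have "emeasure ?M ?E = (\<integral>\<^sup>+\<omega>. indicator ?E \<omega> \<partial>?M)"
    by (intro nn_integral_indicator[symmetric]) (simp add: sets_chain_law)
  also have "\<dots> \<le> (\<integral>\<^sup>+\<omega>. ennreal (exp (- l * t)) * (\<Prod>j\<in>{1..<n}. \<psi> j (\<omega> (j - 1)) (\<omega> j)) \<partial>?M)"
  proof (rule nn_integral_mono)
    fix \<omega> assume "\<omega> \<in> space ?M"
    then have \<omega>: "\<And>i. i < n \<Longrightarrow> \<omega> i \<in> space S"
      by (auto simp: space_chain_law intro: component_in_space_PiM)
    have "t \<le> X \<omega>" if "\<omega> \<in> ?E"
      unfolding X_def by (rule mart_incr_sum_ge[OF n]) (use \<omega> that in auto)
    then have "\<omega> \<in> ?E \<Longrightarrow> 1 \<le> exp (- l * t) * exp (l * X \<omega>)"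
      using l by (simp add: exp_add[symmetric] mult_left_mono)
    then show "indicator ?E \<omega> \<le> ennreal (exp (- l * t)) * (\<Prod>j\<in>{1..<n}. \<psi> j (\<omega> (j - 1)) (\<omega> j))"
      unfolding prod_eq by (auto simp: indicator_def simp flip: ennreal_mult intro: ennreal_leI[of 1, simplified])
  qed
  also have "\<dots> = ennreal (exp (- l * t)) * (\<integral>\<^sup>+\<omega>. (\<Prod>j\<in>{1..<n}. \<psi> j (\<omega> (j - 1)) (\<omega> j)) \<partial>?M)"
    by (rule nn_integral_cmult)
      (simp only: measurable_cong_sets[OF sets_chain_law refl] measurable_prod_consecutive[OF \<psi>])
  also have "\<dots> \<le> ennreal (exp (- l * t)) * ennreal (exp (l\<^sup>2 * A\<^sup>2 / 2)) ^ (n - 1)"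
    unfolding \<psi>_def
    by (intro mult_left_mono nn_integral_chain_law_prod_le[OF \<psi>[unfolded \<psi>_def] _ n]
        nn_integral_exp_mart_incr_le[OF _ l A]) auto
  also have "\<dots> = ennreal (exp (- l * t) * exp (real (n - 1) * (l\<^sup>2 * A\<^sup>2 / 2)))"
    by (simp add: ennreal_power ennreal_mult flip: exp_of_nat_mult)
  also have "\<dots> = ennreal (exp (- l * t + real (n - 1) * (l\<^sup>2 * A\<^sup>2 / 2)))"
    by (simp only: exp_add)
  also have "\<dots> \<le> ennreal (exp (- l * t + real n * l\<^sup>2 * A\<^sup>2 / 2))"
    by (intro ennreal_leI exp_mono add_left_mono)
      (simp add: mult.assoc mult_right_mono del: of_nat_diff)
  finally show ?thesis .
qed

lemma measure_partial_sum_ge_le: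
  assumes n: "1 \<le> n" and t: "0 < t" and A: "0 < A" "poisson_bound \<le> A"
  shows "measure (chain_law S K \<mu> n)
      {\<omega> \<in> space (PiM {..<n} (\<lambda>_. S)). poisson_bound + t \<le> (\<Sum>i<n. f (\<omega> i)) - real n * c}
    \<le> exp (- t\<^sup>2 / (2 * real n * A\<^sup>2))"
proof -
  define l where "l = t / (real n * A\<^sup>2)"
  have l: "0 < l" using n t A by (simp add: l_def)
  have "- l * t + real n * l\<^sup>2 * A\<^sup>2 / 2 = - t\<^sup>2 / (2 * real n * A\<^sup>2)"
    using n A by (simp add: l_def field_simps power2_eq_square)
  then show ?thesis
    using emeasure_partial_sum_ge_le[OF n l A(2), of t]
    by (simp add: measure_def enn2real_leI)
qed

lemma geom_ergodic_observable_uminus: "geom_ergodic_observable S K \<mu> (\<lambda>z. - f z) (- c) b q"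
proof (intro geom_ergodic_observable.intro geom_ergodic_observable_axioms.intro markov_chain_axioms)
  show "\<exists>B. \<forall>z\<in>space S. \<bar>- f z\<bar> \<le> B" using f_bounded by simp
  show "\<bar>(\<integral>x. - f x \<partial>kernel_pow S K k z) - - c\<bar> \<le> b * q ^ k" if "z \<in> space S" for k z
    using mean_conv[OF that, of k] by (simp add: abs_minus_commute)
qed (use q b in auto)

lemma measure_abs_partial_sum_ge_le:
  assumes n: "1 \<le> n" and t: "0 < t" and A: "0 < A" "poisson_bound \<le> A"
  shows "{\<omega> \<in> space (PiM {..<n} (\<lambda>_. S)). poisson_bound + t \<le> \<bar>(\<Sum>i<n. f (\<omega> i)) - real n * c\<bar>}
      \<in> sets (chain_law S K \<mu> n)" (is "?E \<in> _")
    and "measure (chain_law S K \<mu> n)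
      {\<omega> \<in> space (PiM {..<n} (\<lambda>_. S)). poisson_bound + t \<le> \<bar>(\<Sum>i<n. f (\<omega> i)) - real n * c\<bar>}
    \<le> 2 * exp (- t\<^sup>2 / (2 * real n * A\<^sup>2))"
proof -
  interpret neg: geom_ergodic_observable S K \<mu> "\<lambda>z. - f z" "- c" b q by (rule geom_ergodic_observable_uminus)
  interpret prob_space "chain_law S K \<mu> n" by (rule prob_space_chain_law)
  let ?upper = "{\<omega> \<in> space (PiM {..<n} (\<lambda>_. S)). poisson_bound + t \<le> (\<Sum>i<n. f (\<omega> i)) - real n * c}"
  let ?lower = "{\<omega> \<in> space (PiM {..<n} (\<lambda>_. S)). poisson_bound + t \<le> (\<Sum>i<n. - f (\<omega> i)) - real n * - c}"
  have "?E = ?upper \<union> ?lower"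
    by (auto simp: abs_le_iff sum_negf)
  moreover have events: "?upper \<in> events" "?lower \<in> events"
    using neg.partial_sum_measurable by (simp_all add: sets_chain_law)
  moreover have "prob (?upper \<union> ?lower) \<le> prob ?upper + prob ?lower"
    using events by (rule measure_Un_le)
  moreover have "prob ?upper \<le> exp (- t\<^sup>2 / (2 * real n * A\<^sup>2))"
    by (rule measure_partial_sum_ge_le[OF n t A])
  moreover have "prob ?lower \<le> exp (- t\<^sup>2 / (2 * real n * A\<^sup>2))"
    using neg.measure_partial_sum_ge_le[OF n t] A by (simp add: neg.poisson_bound_def poisson_bound_def)
  ultimately show "?E \<in> events" "prob ?E \<le> 2 * exp (- t\<^sup>2 / (2 * real n * A\<^sup>2))"
    by auto
qed

end

lemma union_tail_le_if_ln_le: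
  fixes A \<epsilon> \<delta> :: real and N n :: nat
  assumes "0 < \<delta>" "1 \<le> N" "1 \<le> n" and ln_le: "ln (2 * real N / \<delta>) \<le> real n * \<epsilon>\<^sup>2 / (2 * A\<^sup>2)"
  shows "2 * real N * exp (- (real n * \<epsilon>)\<^sup>2 / (2 * real n * A\<^sup>2)) \<le> \<delta>"
proof -
  have "- (real n * \<epsilon>)\<^sup>2 / (2 * real n * A\<^sup>2) = - (real n * \<epsilon>\<^sup>2 / (2 * A\<^sup>2))"
    using assms by (simp add: power2_eq_square)
  also have "\<dots> \<le> ln (\<delta> / (2 * real N))"
    using assms by (simp add: ln_div)
  finally have "exp (- (real n * \<epsilon>)\<^sup>2 / (2 * real n * A\<^sup>2)) \<le> \<delta> / (2 * real N)"
    using assms by (simp add: ln_ge_iff)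
  then show ?thesis using assms by (simp add: field_simps)
qed

lemma sub_gaussian_scale_exists:
  fixes a \<epsilon> \<delta> :: real and N n :: nat
  assumes a: "0 \<le> a" and \<epsilon>: "0 < \<epsilon>" and \<delta>: "0 < \<delta>" "\<delta> \<le> 1" and N: "2 \<le> N" and n: "1 \<le> n"
    and n_large: "128 * a\<^sup>2 * ln (real N / \<delta>) / \<epsilon>\<^sup>2 \<le> real n"
  obtains A :: real
  where "0 < A" "a \<le> A" "2 * real N * exp (- (real n * \<epsilon>)\<^sup>2 / (2 * real n * A\<^sup>2)) \<le> \<delta>"
proof -
  have N_\<delta>: "2 \<le> real N / \<delta>"
    using N \<delta> by (simp add: field_simps)
  then have ln_pos: "0 < ln (2 * real N / \<delta>)" by simp
  have suff: "2 * real N * exp (- (real n * \<epsilon>)\<^sup>2 / (2 * real n * A\<^sup>2)) \<le> \<delta>"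
    if "ln (2 * real N / \<delta>) \<le> real n * \<epsilon>\<^sup>2 / (2 * A\<^sup>2)" for A :: real
    using \<delta> N n that by (intro union_tail_le_if_ln_le) auto
  show ?thesis
  proof (cases "a = 0")
    case True
    \<comment> \<open>Then every scale \<open>A > 0\<close> is admissible; take the one that makes the tail exactly \<open>\<delta>\<close>.\<close>
    define A where "A = sqrt (real n * \<epsilon>\<^sup>2 / (2 * ln (2 * real N / \<delta>)))"
    have A_pos: "0 < A" using ln_pos n \<epsilon> by (simp add: A_def)
    have "A\<^sup>2 = real n * \<epsilon>\<^sup>2 / (2 * ln (2 * real N / \<delta>))"
      using ln_pos n by (simp add: A_def)
    then have "ln (2 * real N / \<delta>) = real n * \<epsilon>\<^sup>2 / (2 * A\<^sup>2)"
      using ln_pos A_pos by (simp add: field_simps)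
    with A_pos True show ?thesis by (intro that[of A] suff) auto
  next
    case False
    then have a_pos: "0 < a" using a by simp
    have "ln (2 * real N / \<delta>) = ln (2 * (real N / \<delta>))" by simp
    also have "\<dots> = ln 2 + ln (real N / \<delta>)"
      using N_\<delta> by (intro ln_mult_pos) auto
    also have "\<dots> \<le> 64 * ln (real N / \<delta>)"
    proof -
      have "ln 2 \<le> ln (real N / \<delta>)" "0 \<le> ln (real N / \<delta>)" using N_\<delta> by simp_all
      then show ?thesis by linarith
    qed
    also have "\<dots> \<le> real n * \<epsilon>\<^sup>2 / (2 * a\<^sup>2)"
      using n_large a_pos \<epsilon> by (simp add: field_simps)
    finally show ?thesis using a_pos by (intro that[of a] suff) auto
  qed
qed

locale lipschitz_loss_chain = markov_chain BZ P \<mu>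
  for BZ :: "'z measure" and P and \<mu> +
  fixes Zs :: "'z set" and \<rho> :: "'z \<Rightarrow> 'z \<Rightarrow> real" and \<pi> :: "'z measure"
    and H :: "'h set" and dH :: "'h \<Rightarrow> 'h \<Rightarrow> real" and loss :: "'h \<Rightarrow> 'z \<Rightarrow> real"
    and L Lb C1 C2 :: real
  assumes metric: "Metric_space Zs \<rho>"
    and \<rho>_bounded: "\<exists>B. \<forall>z\<in>Zs. \<forall>w\<in>Zs. \<rho> z w \<le> B"
    and BZ_eq: "BZ = borel_of_top (Metric_space.mtopology Zs \<rho>)"
    and \<pi>: "\<pi> \<in> space (prob_algebra BZ)"
    and H_metric: "Metric_space H dH"
    and H_totally_bounded: "Metric_space.mtotally_bounded H dH H"
    and loss_nonneg: "\<And>h z. h \<in> H \<Longrightarrow> z \<in> Zs \<Longrightarrow> 0 \<le> loss h z"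
    and loss_lipschitz: "\<And>h1 h2 z1 z2. h1 \<in> H \<Longrightarrow> h2 \<in> H \<Longrightarrow> z1 \<in> Zs \<Longrightarrow> z2 \<in> Zs \<Longrightarrow>
        \<bar>loss h1 z1 - loss h2 z2\<bar> \<le> L * \<rho> z1 z2 + Lb * dH h1 h2"
    and L: "0 \<le> L" and Lb: "0 \<le> Lb" and C1: "0 \<le> C1" and C2: "0 < C2"
    and conv: "\<And>z k. z \<in> Zs \<Longrightarrow>
        wasserstein BZ \<rho> (kernel_pow BZ P k z) \<pi> \<le> ennreal (C1 * exp (- C2 * real k))"
begin

definition risk :: "'h \<Rightarrow> real" where
  "risk h = (\<integral>z. loss h z \<partial>\<pi>)"

definition emp_risk :: "'z list \<Rightarrow> 'h \<Rightarrow> real" where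
  "emp_risk zs h = (\<Sum>z\<leftarrow>zs. loss h z) / real (length zs)"

definition bias_bound :: real where
  "bias_bound = L * C1 / (1 - exp (- C2))"

lemma space_BZ: "space BZ = Zs"
  unfolding BZ_eq borel_of_top_def
  by (simp add: space_measure_of_conv Metric_space.topspace_mtopology[OF metric])

lemma prob_space_\<pi>: "prob_space \<pi>" and sets_\<pi>: "sets \<pi> = sets BZ"
  using \<pi> by (auto simp: space_prob_algebra)

lemma space_\<pi>: "space \<pi> = Zs"
  using sets_eq_imp_space_eq[OF sets_\<pi>] by (simp add: space_BZ)

lemma Zs_nonempty: "Zs \<noteq> {}"
  using prob_space.not_empty[OF prob_space_\<pi>] by (simp add: space_\<pi>)

lemma loss_lipschitz_point:
  "h \<in> H \<Longrightarrow> z1 \<in> Zs \<Longrightarrow> z2 \<in> Zs \<Longrightarrow> \<bar>loss h z1 - loss h z2\<bar> \<le> L * \<rho> z1 z2"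
  using loss_lipschitz[of h h z1 z2] Metric_space.zero[OF H_metric, of h h] by simp

lemma loss_lipschitz_hyp:
  "h \<in> H \<Longrightarrow> g \<in> H \<Longrightarrow> z \<in> Zs \<Longrightarrow> \<bar>loss h z - loss g z\<bar> \<le> Lb * dH h g"
  using loss_lipschitz[of h g z z] Metric_space.zero[OF metric, of z z] by simp

lemma loss_measurable: "h \<in> H \<Longrightarrow> loss h \<in> borel_measurable BZ"
  unfolding BZ_eq
  by (intro borel_measurable_continuous_map Metric_space.continuous_map_euclidean_if_Lipschitz[OF metric L]
      loss_lipschitz_point)

lemma loss_bounded:
  assumes h: "h \<in> H"
  shows "\<exists>B. \<forall>z\<in>Zs. \<bar>loss h z\<bar> \<le> B"
proof -
  obtain z0 where z0: "z0 \<in> Zs" using Zs_nonempty by blast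
  obtain B\<rho> where B\<rho>: "\<And>z w. z \<in> Zs \<Longrightarrow> w \<in> Zs \<Longrightarrow> \<rho> z w \<le> B\<rho>" using \<rho>_bounded by blast
  have "\<bar>loss h z\<bar> \<le> \<bar>loss h z0\<bar> + L * B\<rho>" if z: "z \<in> Zs" for z
    using loss_lipschitz_point[OF h z z0] mult_left_mono[OF B\<rho>[OF z z0] L] by linarith
  then show ?thesis by blast
qed

lemma integrable_loss:
  assumes h: "h \<in> H"
  shows "integrable \<pi> (loss h)"
proof -
  obtain B where "\<And>z. z \<in> Zs \<Longrightarrow> \<bar>loss h z\<bar> \<le> B" using loss_bounded[OF h] by blast
  with loss_measurable[OF h] show ?thesis
    by (intro prob_space.integrable_abs_integral_le(1)[OF prob_space_\<pi>])
      (auto simp: space_\<pi> measurable_cong_sets[OF sets_\<pi> refl])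
qed

lemma risk_nonneg: "h \<in> H \<Longrightarrow> 0 \<le> risk h"
  unfolding risk_def by (intro Bochner_Integration.integral_nonneg) (simp add: space_\<pi> loss_nonneg)

lemma bdd_below_risk: "bdd_below (risk ` H)"
  using risk_nonneg by (intro bdd_belowI2[where m = 0])

lemma abs_risk_diff_le:
  assumes h: "h \<in> H" and g: "g \<in> H" and close: "\<And>z. z \<in> Zs \<Longrightarrow> \<bar>loss h z - loss g z\<bar> \<le> c"
  shows "\<bar>risk h - risk g\<bar> \<le> c"
proof -
  have "risk h - risk g = (\<integral>z. loss h z - loss g z \<partial>\<pi>)"
    unfolding risk_def using integrable_loss[OF h] integrable_loss[OF g] by simp
  also have "\<bar>\<dots>\<bar> \<le> c"
    using loss_measurable[OF h] loss_measurable[OF g] close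
    by (intro prob_space.integrable_abs_integral_le(2)[OF prob_space_\<pi>])
      (auto simp: space_\<pi> measurable_cong_sets[OF sets_\<pi> refl])
  finally show ?thesis .
qed

lemma abs_emp_risk_diff_le:
  assumes zs: "zs \<noteq> []" "set zs \<subseteq> Zs" and close: "\<And>z. z \<in> Zs \<Longrightarrow> \<bar>loss h z - loss g z\<bar> \<le> c"
  shows "\<bar>emp_risk zs h - emp_risk zs g\<bar> \<le> c"
proof -
  have "\<bar>emp_risk zs h - emp_risk zs g\<bar> = \<bar>\<Sum>z\<leftarrow>zs. loss h z - loss g z\<bar> / real (length zs)"
    unfolding emp_risk_def by (simp add: sum_list_subtractf flip: diff_divide_distrib)
  also have "\<dots> \<le> (\<Sum>z\<leftarrow>zs. c) / real (length zs)"
  proof (intro divide_right_mono)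
    have "\<bar>\<Sum>z\<leftarrow>zs. loss h z - loss g z\<bar> \<le> (\<Sum>z\<leftarrow>zs. \<bar>loss h z - loss g z\<bar>)"
      using sum_list_abs[of "map (\<lambda>z. loss h z - loss g z) zs"] by (simp add: comp_def)
    also have "\<dots> \<le> (\<Sum>z\<leftarrow>zs. c)"
      using zs close by (intro sum_list_mono) auto
    finally show "\<bar>\<Sum>z\<leftarrow>zs. loss h z - loss g z\<bar> \<le> (\<Sum>z\<leftarrow>zs. c)" .
  qed simp
  also have "\<dots> = c" using zs by (simp add: sum_list_triv)
  finally show ?thesis .
qed

lemma abs_emp_risk_minus_risk_le_net:
  assumes zs: "zs \<noteq> []" "set zs \<subseteq> Zs" and h: "h \<in> H" and F: "F \<subseteq> H"
    and net: "\<exists>g\<in>F. \<forall>z\<in>Zs. \<bar>loss h z - loss g z\<bar> \<le> c"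
    and good: "\<And>g. g \<in> F \<Longrightarrow> \<bar>emp_risk zs g - risk g\<bar> \<le> d"
  shows "\<bar>emp_risk zs h - risk h\<bar> \<le> d + 2 * c"
proof -
  obtain g where g: "g \<in> F" and close: "\<And>z. z \<in> Zs \<Longrightarrow> \<bar>loss h z - loss g z\<bar> \<le> c"
    using net by blast
  have "\<bar>emp_risk zs h - emp_risk zs g\<bar> \<le> c"
    using zs close by (rule abs_emp_risk_diff_le)
  moreover have "\<bar>risk h - risk g\<bar> \<le> c"
    using h g F close by (intro abs_risk_diff_le) auto
  ultimately show ?thesis using good[OF g] by linarith
qed

lemma loss_observable:
  assumes h: "h \<in> H"
  shows "geom_ergodic_observable BZ P \<mu> (loss h) (risk h) (L * C1) (exp (- C2))"
proof (intro geom_ergodic_observable.intro geom_ergodic_observable_axioms.intro markov_chain_axioms)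
  obtain B where B: "\<And>z. z \<in> Zs \<Longrightarrow> \<bar>loss h z\<bar> \<le> B" using loss_bounded[OF h] by blast
  show "loss h \<in> borel_measurable BZ" by (rule loss_measurable[OF h])
  show "\<exists>B. \<forall>z\<in>space BZ. \<bar>loss h z\<bar> \<le> B" using B by (auto simp: space_BZ)
  fix k z assume z: "z \<in> space BZ"
  have "\<bar>(\<integral>x. loss h x \<partial>kernel_pow BZ P k z) - (\<integral>x. loss h x \<partial>\<pi>)\<bar> \<le> L * (C1 * exp (- C2 * real k))"
    using z C1 loss_lipschitz_point[OF h] B conv
    by (intro abs_integral_diff_le_wasserstein[OF loss_measurable[OF h], where B = B and L = L]) (auto simp: space_BZ L)
  then show "\<bar>(\<integral>x. loss h x \<partial>kernel_pow BZ P k z) - risk h\<bar> \<le> L * C1 * exp (- C2) ^ k"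
    by (simp add: risk_def mult_ac flip: exp_of_nat_mult)
qed (use L C1 C2 in auto)

lemma deviation_event_on_net:
  assumes F: "finite F" "F \<subseteq> H" and n: "1 \<le> n" and t: "0 < t" and A: "0 < A" "bias_bound \<le> A"
  shows "\<exists>E\<in>sets (chain_law BZ P \<mu> n).
      E \<subseteq> {\<omega> \<in> space (PiM {..<n} (\<lambda>_. BZ)).
             \<forall>g\<in>F. \<bar>(\<Sum>i<n. loss g (\<omega> i)) - real n * risk g\<bar> < bias_bound + t}
      \<and> 1 - real (card F) * (2 * exp (- t\<^sup>2 / (2 * real n * A\<^sup>2))) \<le> measure (chain_law BZ P \<mu> n) E"
proof -
  interpret prob_space "chain_law BZ P \<mu> n" by (rule prob_space_chain_law)
  define Bad where "Bad g = {\<omega> \<in> space (PiM {..<n} (\<lambda>_. BZ)).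
      bias_bound + t \<le> \<bar>(\<Sum>i<n. loss g (\<omega> i)) - real n * risk g\<bar>}" for g
  have bad: "Bad g \<in> events \<and> prob (Bad g) \<le> 2 * exp (- t\<^sup>2 / (2 * real n * A\<^sup>2))" if "g \<in> F" for g
  proof -
    interpret obs: geom_ergodic_observable BZ P \<mu> "loss g" "risk g" "L * C1" "exp (- C2)"
      using that F by (intro loss_observable) auto
    have "obs.poisson_bound = bias_bound"
      unfolding obs.poisson_bound_def bias_bound_def ..
    then show ?thesis
      using obs.measure_abs_partial_sum_ge_le[OF n t A(1)] A(2) unfolding Bad_def by simp
  qed
  have "1 - real (card F) * (2 * exp (- t\<^sup>2 / (2 * real n * A\<^sup>2))) \<le> prob (space (chain_law BZ P \<mu> n) - (\<Union>g\<in>F. Bad g))"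
    by (rule prob_diff_UN_ge[OF F(1)]) (use bad in auto)
  moreover have "space (chain_law BZ P \<mu> n) - (\<Union>g\<in>F. Bad g) \<in> events"
    using bad F(1) by blast
  moreover have "space (chain_law BZ P \<mu> n) - (\<Union>g\<in>F. Bad g) \<subseteq> {\<omega> \<in> space (PiM {..<n} (\<lambda>_. BZ)).
      \<forall>g\<in>F. \<bar>(\<Sum>i<n. loss g (\<omega> i)) - real n * risk g\<bar> < bias_bound + t}"
    by (auto simp: Bad_def space_chain_law not_le)
  ultimately show ?thesis by blast
qed

lemma loss_net:
  assumes \<epsilon>: "0 < \<epsilon>" and ne: "H \<noteq> {}"
  obtains F where "finite F" "F \<subseteq> H" "card F = covering_number dH H (ereal \<epsilon> / ereal (4 * Lb))"
    "\<forall>h\<in>H. \<exists>g\<in>F. \<forall>z\<in>Zs. \<bar>loss h z - loss g z\<bar> \<le> \<epsilon> / 4"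
proof -
  let ?r = "ereal \<epsilon> / ereal (4 * Lb)"
  have close: "\<bar>loss h z - loss g z\<bar> \<le> \<epsilon> / 4"
    if hg: "h \<in> H" "g \<in> H" and d: "ereal (dH h g) < ?r" and z: "z \<in> Zs" for h g z
  proof (cases "Lb = 0")
    case True
    then show ?thesis using loss_lipschitz_hyp[OF hg z] \<epsilon> by simp
  next
    case False
    then have "dH h g < \<epsilon> / (4 * Lb)" "0 < Lb" using d Lb by auto
    then have "Lb * dH h g \<le> \<epsilon> / 4" by (simp add: field_simps)
    then show ?thesis using loss_lipschitz_hyp[OF hg z] by linarith
  qed
  have "0 < ?r" using \<epsilon> Lb by (cases "Lb = 0") auto
  with covering_number_obtains_net[OF H_metric H_totally_bounded ne]
  obtain F where F: "finite F" "F \<subseteq> H" "card F = covering_number dH H ?r"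
    and cover: "\<And>h. h \<in> H \<Longrightarrow> \<exists>g\<in>F. ereal (dH h g) < ?r"
    by blast
  show ?thesis
  proof (rule that[OF F], intro ballI)
    fix h assume h: "h \<in> H"
    then obtain g where "g \<in> F" "ereal (dH h g) < ?r" using cover by blast
    with h F(2) close show "\<exists>g\<in>F. \<forall>z\<in>Zs. \<bar>loss h z - loss g z\<bar> \<le> \<epsilon> / 4" by blast
  qed
qed

lemma uniform_deviation_event:
  assumes \<epsilon>: "0 < \<epsilon>" and \<delta>: "0 < \<delta>" "\<delta> \<le> 1"
    and F: "finite F" "F \<subseteq> H" "2 \<le> card F"
    and net: "\<And>h. h \<in> H \<Longrightarrow> \<exists>g\<in>F. \<forall>z\<in>Zs. \<bar>loss h z - loss g z\<bar> \<le> \<epsilon> / 4"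
    and n: "1 \<le> n" "16 * bias_bound \<le> real n * \<epsilon>"
      "128 * bias_bound\<^sup>2 * ln (real (card F) / \<delta>) / \<epsilon>\<^sup>2 \<le> real n"
  shows "\<exists>E\<in>sets (chain_law BZ P \<mu> n).
      E \<subseteq> {\<omega> \<in> space (PiM {..<n} (\<lambda>_. BZ)).
             \<forall>h\<in>H. \<bar>emp_risk (map \<omega> [0..<n]) h - risk h\<bar> \<le> 25 * \<epsilon> / 16}
      \<and> 1 - \<delta> \<le> measure (chain_law BZ P \<mu> n) E"
proof -
  have bias: "0 \<le> bias_bound" unfolding bias_bound_def using L C1 C2 by simp
  obtain A where A: "0 < A" "bias_bound \<le> A"
    and tail: "2 * real (card F) * exp (- (real n * \<epsilon>)\<^sup>2 / (2 * real n * A\<^sup>2)) \<le> \<delta>"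
    using sub_gaussian_scale_exists[OF bias \<epsilon> \<delta> F(3) n(1,3)] by blast
  have t: "0 < real n * \<epsilon>" using n(1) \<epsilon> by simp
  obtain E where E: "E \<in> sets (chain_law BZ P \<mu> n)"
    and good: "E \<subseteq> {\<omega> \<in> space (PiM {..<n} (\<lambda>_. BZ)).
             \<forall>g\<in>F. \<bar>(\<Sum>i<n. loss g (\<omega> i)) - real n * risk g\<bar> < bias_bound + real n * \<epsilon>}"
    and prob: "1 - real (card F) * (2 * exp (- (real n * \<epsilon>)\<^sup>2 / (2 * real n * A\<^sup>2)))
      \<le> measure (chain_law BZ P \<mu> n) E"
    using deviation_event_on_net[OF F(1,2) n(1) t A] by blast
  have "\<bar>emp_risk (map \<omega> [0..<n]) h - risk h\<bar> \<le> 17 * \<epsilon> / 16 + 2 * (\<epsilon> / 4)"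
    if \<omega>: "\<omega> \<in> E" and h: "h \<in> H" for \<omega> h
  proof (rule abs_emp_risk_minus_risk_le_net[OF _ _ h F(2) net[OF h]])
    have "\<omega> \<in> space (PiM {..<n} (\<lambda>_. BZ))" using good \<omega> by auto
    then show "map \<omega> [0..<n] \<noteq> []" "set (map \<omega> [0..<n]) \<subseteq> Zs"
      using n(1) component_in_space_PiM[of \<omega> "{..<n}" BZ] by (auto simp: space_BZ)
    fix g assume g: "g \<in> F"
    have emp_eq: "emp_risk (map \<omega> [0..<n]) g = (\<Sum>i<n. loss g (\<omega> i)) / real n"
      by (simp add: emp_risk_def sum_list_sum_nth atLeast0LessThan)
    have "\<bar>emp_risk (map \<omega> [0..<n]) g - risk g\<bar> < bias_bound / real n + \<epsilon>"
      using good \<omega> g n(1) by (auto simp: emp_eq field_simps)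
    also have "\<dots> \<le> 17 * \<epsilon> / 16"
      using n(1,2) by (simp add: field_simps)
    finally show "\<bar>emp_risk (map \<omega> [0..<n]) g - risk g\<bar> \<le> 17 * \<epsilon> / 16" by simp
  qed
  with E good prob tail show ?thesis by (intro bexI[of _ E]) auto
qed

lemma abs_risk_minus_INF_le_singleton_net:
  assumes g: "g \<in> H" and near: "\<forall>h\<in>H. \<forall>z\<in>Zs. \<bar>loss h z - loss g z\<bar> \<le> c" and hs: "hs \<in> H"
  shows "\<bar>risk hs - (INF h\<in>H. risk h)\<bar> \<le> 2 * c"
proof (rule abs_diff_INF_le[OF hs bdd_below_risk])
  have near_g: "\<bar>risk h - risk g\<bar> \<le> c" if h: "h \<in> H" for h
    using near h by (intro abs_risk_diff_le[OF h g]) auto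
  fix h assume "h \<in> H"
  with near_g[OF hs] near_g[of h] show "risk hs \<le> risk h + 2 * c" by linarith
qed

text \<open>The sample-size condition pays for the union bound only when the net has at least two
  points (then \<open>ln (2 card F / \<delta>) \<le> 2 ln (card F / \<delta>)\<close>); a one-point net bounds the excess
  risk by \<open>\<epsilon> / 2\<close> surely.\<close>

lemma approx_erm_excess_risk:
  assumes \<epsilon>: "0 < \<epsilon>" and \<delta>: "0 < \<delta>" "\<delta> < 1"
    and alg: "\<And>zs. zs \<noteq> [] \<Longrightarrow> set zs \<subseteq> Zs \<Longrightarrow>
        alg zs \<in> H \<and> emp_risk zs (alg zs) < (INF h\<in>H. emp_risk zs h) + \<epsilon>"
    and n: "1 \<le> n" "16 * bias_bound \<le> real n * \<epsilon>"
      "128 * bias_bound\<^sup>2 * ln (real (covering_number dH H (ereal \<epsilon> / ereal (4 * Lb))) / \<delta>) / \<epsilon>\<^sup>2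
         \<le> real n"
  shows "\<exists>B\<in>sets (chain_law BZ P \<mu> n).
      B \<subseteq> {\<omega> \<in> space (PiM {..<n} (\<lambda>_. BZ)). \<bar>risk (alg (map \<omega> [0..<n])) - (INF h\<in>H. risk h)\<bar> < 5 * \<epsilon>}
      \<and> 1 - \<delta> \<le> measure (chain_law BZ P \<mu> n) B"
proof -
  let ?\<Omega> = "space (PiM {..<n} (\<lambda>_. BZ))"
  have sample: "map \<omega> [0..<n] \<noteq> [] \<and> set (map \<omega> [0..<n]) \<subseteq> Zs" if "\<omega> \<in> ?\<Omega>" for \<omega>
    using n(1) component_in_space_PiM[OF that] by (auto simp: space_BZ)
  obtain z0 where "z0 \<in> Zs" using Zs_nonempty by blast
  then have "H \<noteq> {}" using alg[of "[z0]"] by auto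
  obtain F where F: "finite F" "F \<subseteq> H"
    and card_F: "card F = covering_number dH H (ereal \<epsilon> / ereal (4 * Lb))"
    and net: "\<forall>h\<in>H. \<exists>g\<in>F. \<forall>z\<in>Zs. \<bar>loss h z - loss g z\<bar> \<le> \<epsilon> / 4"
    by (rule loss_net[OF \<epsilon> \<open>H \<noteq> {}\<close>])
  have "F \<noteq> {}" using net \<open>H \<noteq> {}\<close> by blast
  then have "card F \<noteq> 0" using F(1) by simp
  then consider "card F = 1" | "2 \<le> card F" by (cases "card F = 1") auto
  then show ?thesis
  proof cases
    case 1
    then obtain g where "F = {g}" by (rule card_1_singletonE)
    then have g: "g \<in> H" and near: "\<forall>h\<in>H. \<forall>z\<in>Zs. \<bar>loss h z - loss g z\<bar> \<le> \<epsilon> / 4"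
      using F(2) net by auto
    have "\<bar>risk (alg (map \<omega> [0..<n])) - (INF h\<in>H. risk h)\<bar> < 5 * \<epsilon>" if "\<omega> \<in> ?\<Omega>" for \<omega>
    proof -
      have "alg (map \<omega> [0..<n]) \<in> H" using alg sample[OF that] by blast
      from abs_risk_minus_INF_le_singleton_net[OF g near this] show ?thesis using \<epsilon> by linarith
    qed
    then show ?thesis
      using prob_space.prob_space[OF prob_space_chain_law] \<delta>
      by (intro bexI[of _ ?\<Omega>]) (auto simp: sets_chain_law space_chain_law)
  next
    case 2
    obtain E where E: "E \<in> sets (chain_law BZ P \<mu> n)" "1 - \<delta> \<le> measure (chain_law BZ P \<mu> n) E"
      and dev: "E \<subseteq> {\<omega> \<in> ?\<Omega>. \<forall>h\<in>H. \<bar>emp_risk (map \<omega> [0..<n]) h - risk h\<bar> \<le> 25 * \<epsilon> / 16}"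
      using uniform_deviation_event[OF \<epsilon> \<delta>(1) _ F 2 net[rule_format] n(1,2)] n(3) \<delta> card_F by auto
    have "\<bar>risk (alg (map \<omega> [0..<n])) - (INF h\<in>H. risk h)\<bar> < 5 * \<epsilon>" if "\<omega> \<in> E" for \<omega>
    proof -
      let ?zs = "map \<omega> [0..<n]"
      have "\<omega> \<in> ?\<Omega>" and dev_\<omega>: "\<And>h. h \<in> H \<Longrightarrow> \<bar>emp_risk ?zs h - risk h\<bar> \<le> 25 * \<epsilon> / 16"
        using dev that by blast+
      then have hs: "alg ?zs \<in> H" and min: "emp_risk ?zs (alg ?zs) < (INF h\<in>H. emp_risk ?zs h) + \<epsilon>"
        using alg sample by blast+
      from approx_minimizer_excess_risk_le[OF hs bdd_below_risk min dev_\<omega>] show ?thesis using \<epsilon> by linarith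
    qed
    with E dev show ?thesis by (intro bexI[of _ E]) auto
  qed
qed

end

theorem theorem1p1:
  fixes MX :: "'x measure" and Ys :: "real set" and Zs :: "('x \<times> real) set"
    and \<rho> :: "'x \<times> real \<Rightarrow> 'x \<times> real \<Rightarrow> real"
    and BZ :: "('x \<times> real) measure"
    and P :: "'x \<times> real \<Rightarrow> ('x \<times> real) measure"
    and H :: "('x \<Rightarrow> real) set" and dH :: "('x \<Rightarrow> real) \<Rightarrow> ('x \<Rightarrow> real) \<Rightarrow> real"
    and lo :: "real \<Rightarrow> real \<Rightarrow> real" and L Lb \<eta> :: real
    and \<pi> \<mu> :: "('x \<times> real) measure" and C1 C2 \<epsilon> \<delta> :: real
    and A :: "('x \<times> real) list \<Rightarrow> ('x \<Rightarrow> real)" and n :: nat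
  assumes Z_sub: "Zs \<subseteq> space MX \<times> Ys"
    and metric: "Metric_space Zs \<rho>"
    and complete: "Metric_space.mcomplete Zs \<rho>"
    and separable: "separable_space (Metric_space.mtopology Zs \<rho>)"
    and \<rho>_bounded: "\<exists>B. \<forall>z\<in>Zs. \<forall>w\<in>Zs. \<rho> z w \<le> B"
    and BZ_def: "BZ = borel_of_top (Metric_space.mtopology Zs \<rho>)"
    and prX: "\<forall>S\<in>sets MX. {z\<in>Zs. fst z \<in> S} \<in> sets BZ"
    and prY: "\<forall>S\<in>sets (restrict_space borel Ys). {z\<in>Zs. snd z \<in> S} \<in> sets BZ"
    and kernel: "P \<in> BZ \<rightarrow>\<^sub>M prob_algebra BZ"
    (* (A1) *)
    and H_maps: "\<forall>h\<in>H. \<forall>x\<in>space MX. h x \<in> Ys"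
    and H_metric: "Metric_space H dH"
    and H_tb: "Metric_space.mtotally_bounded H dH H"
    (* (A2) *)
    and lo_nonneg: "\<forall>a\<in>Ys. \<forall>b\<in>Ys. 0 \<le> lo a b"
    and lo_meas: "(\<lambda>p. lo (fst p) (snd p)) \<in> borel_measurable
                    (restrict_space borel Ys \<Otimes>\<^sub>M restrict_space borel Ys)"
    and L_nonneg: "0 \<le> L" and Lb_nonneg: "0 \<le> Lb"
    and lipschitz: "\<forall>z1\<in>Zs. \<forall>z2\<in>Zs. \<forall>h1\<in>H. \<forall>h2\<in>H.
        \<bar>loss_h lo h1 z1 - loss_h lo h2 z2\<bar> \<le> L * \<rho> z1 z2 + Lb * dH h1 h2"
    (* (A3) *)
    and Y_bounded: "bounded Ys"
    and \<eta>: "0 < \<eta>" "\<eta> < 1"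
    and contraction: "\<forall>z1\<in>Zs. \<forall>z2\<in>Zs.
        wasserstein BZ \<rho> (P z1) (P z2) \<le> ennreal ((1 - \<eta>) * \<rho> z1 z2)"
    (* invariant probability measure and geometric convergence *)
    and \<pi>_prob: "\<pi> \<in> space (prob_algebra BZ)"
    and \<pi>_inv: "bind \<pi> P = \<pi>"
    and C1: "0 < C1" and C2: "0 < C2"
    and conv: "\<forall>z\<in>Zs. \<forall>k::nat.
        wasserstein BZ \<rho> (kernel_pow BZ P k z) \<pi> \<le> ennreal (C1 * exp (- C2 * real k))"
    (* algorithm *)
    and \<epsilon>: "0 < \<epsilon>" and \<delta>: "0 < \<delta>" "\<delta> < 1"
    and asem: "ASEM \<epsilon> Zs lo H A"
    (* initial distribution and sample size *)
    and \<mu>_prob: "\<mu> \<in> space (prob_algebra BZ)"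
    and n_pos: "1 \<le> n"
    and n_large: "real n \<ge> max (16 * C1 * L / (\<epsilon> * (1 - exp (- C2))))
        (128 * C1\<^sup>2 * L\<^sup>2 * ln (real (covering_number dH H (ereal \<epsilon> / ereal (4 * Lb))) / \<delta>)
          / (\<epsilon>\<^sup>2 * (1 - exp (- C2))\<^sup>2))"
  shows "\<exists>B\<in>sets (chain_law BZ P \<mu> n).
           B \<subseteq> {\<omega> \<in> space (PiM {..<n} (\<lambda>_. BZ)).
                 \<bar>er \<pi> lo (A (map \<omega> [0..<n])) - opt \<pi> lo H\<bar> < 5 * \<epsilon>}
         \<and> measure (chain_law BZ P \<mu> n) B \<ge> 1 - \<delta>"
proof -
  interpret lipschitz_loss_chain BZ P \<mu> Zs \<rho> \<pi> H dH "loss_h lo" L Lb C1 C2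
  proof (intro lipschitz_loss_chain.intro markov_chain.intro lipschitz_loss_chain_axioms.intro)
    show "0 \<le> loss_h lo h z" if "h \<in> H" "z \<in> Zs" for h z
      using that Z_sub H_maps lo_nonneg unfolding loss_h_def by (auto simp: mem_Times_iff)
    show "\<bar>loss_h lo h1 z1 - loss_h lo h2 z2\<bar> \<le> L * \<rho> z1 z2 + Lb * dH h1 h2"
      if "h1 \<in> H" "h2 \<in> H" "z1 \<in> Zs" "z2 \<in> Zs" for h1 h2 z1 z2
      using lipschitz that by blast
    show "wasserstein BZ \<rho> (kernel_pow BZ P k z) \<pi> \<le> ennreal (C1 * exp (- C2 * real k))"
      if "z \<in> Zs" for z k
      using conv that by blast
    show "0 \<le> C1" using C1 by simp
  qed (fact kernel \<mu>_prob metric \<rho>_bounded BZ_def \<pi>_prob H_metric H_tb L_nonneg Lb_nonneg C2)+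
  have alg: "A zs \<in> H \<and> emp_risk zs (A zs) < (INF h\<in>H. emp_risk zs h) + \<epsilon>"
    if "zs \<noteq> []" "set zs \<subseteq> Zs" for zs
    using asem that unfolding ASEM_def emp_risk_def by blast
  have exp_C2: "0 < 1 - exp (- C2)" using C2 by simp
  have "16 * bias_bound \<le> real n * \<epsilon>"
    and "128 * bias_bound\<^sup>2 * ln (real (covering_number dH H (ereal \<epsilon> / ereal (4 * Lb))) / \<delta>) / \<epsilon>\<^sup>2
      \<le> real n"
    using n_large \<epsilon> exp_C2 by (simp_all add: bias_bound_def field_simps power2_eq_square)
  from approx_erm_excess_risk[OF \<epsilon> \<delta> alg n_pos this] show ?thesis
    unfolding er_def opt_def risk_def .
qed

end
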